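(* Let $A$ be a system with state space $\Omega_A$ that supports uniform universal steering, with steering partner system $B$ (state space $\Omega_B$) and composite state space $\Omega_A\otimes\Omega_B$ as in the context. Let $$\lambda_{\rm opt}=\inf_{e,f\in\mathscr{E}(\Omega_A)}\lambda_{e,f}.$$ Then the (generalised) Tsirelson bound, i.e. the supremum of the Bell functional $$\mathbb{B}=\omega\big(A_1\otimes B_1+A_1\otimes B_2+A_2\otimes B_1-A_2\otimes B_2\big)$$ over all states $\omega\in\Omega_A\otimes\Omega_B$ and all dichotomic ($\pm1$-valued) observables $\mathsf{A}_1,\mathsf{A}_2$ on $\Omega_A$ and $\mathsf{B}_1,\mathsf{B}_2$ on $\Omega_B$, is given by the tight inequality $$\mathbb{B}\le\frac{2}{\lambda_{\rm opt}},$$ which can be saturated.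
   Context: General probabilistic models: a state space $\Omega$ is a compact convex subset of a finite-dimensional real vector space $V$. $A(\Omega)$ denotes the ordered linear space of affine functionals on $\Omega$ with the pointwise order ($f\ge 0$ iff $f(\omega)\ge0$ for all $\omega\in\Omega$) and order unit $u$ ($u(\omega)=1$ for all $\omega$). The effects are $\mathscr{E}(\Omega)=\{e\in A(\Omega): 0\le e(\omega)\le 1\ \forall\omega\in\Omega\}$. A discrete observable is a map $\mathsf{O}$ from a finite outcome set into $\mathscr{E}(\Omega)$ with $\sum_x\mathsf{O}[x]=u$. A dichotomic observable $\mathsf{O}$ with outcomes $\pm1$ is determined by the effect $e=\mathsf{O}[+1]$, with $\mathsf{O}[-1]=e'=u-e$; its associated functional is $O=\mathsf{O}[+1]-\mathsf{O}[-1]$. The cone $V_+$ is generated by $\Omega$ and $V^*$, $V^*_+$ denote the dual space and dual cone. Joint measurability: effects $e,f$ are jointly measurable if there exists $g\in A(\Omega)$ with $0\le g$, $g\le e$, $g\le f$, $e+f\le g+u$. Smearing: for $\lambda\in[0,1]$, $e^{(\lambda)}=\lambda e+\frac{1-\lambda}{2}u$. For effects $e,f$, $\lambda_{e,f}$ is the maximum of $\lambda\in[0,1]$ such that $e^{(\lambda)}$ and $f^{(\lambda)}$ are jointly measurable (i.e. there is $g\in A(\Omega)$ with $g\le e^{(\lambda)}$, $g\le f^{(\lambda)}$, $0\le g$, $e^{(\lambda)}+f^{(\lambda)}-u\le g$). Composite systems: the state space of a composite of systems with state spaces $\Omega_1\subset V_1$, $\Omega_2\subset V_2$ is $\Omega_1\otimes\Omega_2=\{\omega\in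 (V_1\otimes V_2)_+ : (u_1\otimes u_2)(\omega)=1\}$, where the cone $(V_1\otimes V_2)_+$ is any cone lying between the minimal cone $\{\sum_{i,j}\lambda_{ij}v_1^{(i)}\otimes v_2^{(j)}:\lambda_{ij}\ge0,\ v_k^{(i)}\in(V_k)_+\}$ and the maximal cone $(V_1^*\otimes_{min}V_2^* )_+^*$. For $a\in V_1^*$, $b\in V_2^*$ write $\omega(a,b)=(a\otimes b)(\omega)$, extended bilinearly. Each bipartite state $\omega$ defines the linear map $\hat\omega:V_2^*\to V_1$ by $a(\hat\omega(b))=\omega(a,b)$. The $A$-marginal of $\omega\in\Omega_A\otimes\Omega_B$ is $\omega^A=\hat\omega(u_B)\in\Omega_A$. Steering: a state $\omega\in\Omega_A\otimes\Omega_B$ is steering for its $A$-marginal if for every finite collection $\alpha_1,\dots,\alpha_n\in(V_A)_+$ with $0\le u_A(\alpha_i)\le1$ and $\sum_i\alpha_i=\omega^A$, there exists an observable $\{e_1,\dots,e_n\}\subset\mathscr{E}(\Omega_B)$ (with $\sum_i e_i=u_B$) such that $\alpha_i=\hat\omega(e_i)$ for all $i$. A system $A$ supports uniform universal steering if there exist a system $B$ with state space $\Omega_B$ and a composite state space $\Omega_A\otimes\Omega_B$ such that for every $\alpha\in\Omega_A$ there is a state $\omega_\alpha\in\Omega_A\otimes\Omega_B$ with $\omega_\alpha^A=\alpha$ that is steering for its $A$-marginal. *)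

theory Defs
  imports "HOL-Analysis.Analysis"
begin

text \<open>Linear functionals on V (elements of V^*) are represented by vectors via the inner
product: the functional a acts as x \<mapsto> a \<bullet> x. A state space is a compact convex
nonempty set spanning V and lying in the affine hyperplane u = 1, where u is the order
unit; then affine functionals on \<Omega> are exactly the restrictions of linear functionals.\<close>

definition gpt_state_space :: "'a::euclidean_space set \<Rightarrow> 'a \<Rightarrow> bool" where
  "gpt_state_space \<Omega> u \<longleftrightarrow> compact \<Omega> \<and> convex \<Omega> \<and> \<Omega> \<noteq> {} \<and> span \<Omega> = UNIV
     \<and> (\<forall>x\<in>\<Omega>. u \<bullet> x = 1)"

definition pos_cone :: "'a::euclidean_space set \<Rightarrow> 'a set" where
  "pos_cone \<Omega> = {t *\<^sub>R x | t x. t \<ge> 0 \<and> x \<in> \<Omega>}"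

definition dual_cone :: "'a::euclidean_space set \<Rightarrow> 'a set" where
  "dual_cone \<Omega> = {a. \<forall>x\<in>pos_cone \<Omega>. 0 \<le> a \<bullet> x}"

definition gpt_effect :: "'a::euclidean_space set \<Rightarrow> 'a \<Rightarrow> bool" where
  "gpt_effect \<Omega> e \<longleftrightarrow> (\<forall>x\<in>\<Omega>. 0 \<le> e \<bullet> x \<and> e \<bullet> x \<le> 1)"

definition jointly_measurable :: "'a::euclidean_space set \<Rightarrow> 'a \<Rightarrow> 'a \<Rightarrow> 'a \<Rightarrow> bool" where
  "jointly_measurable \<Omega> u e f \<longleftrightarrow> (\<exists>g. \<forall>x\<in>\<Omega>.
      0 \<le> g \<bullet> x \<and> g \<bullet> x \<le> e \<bullet> x \<and> g \<bullet> x \<le> f \<bullet> x \<and> e \<bullet> x + f \<bullet> x \<le> g \<bullet> x + u \<bullet> x)"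

definition smear :: "'a::euclidean_space \<Rightarrow> real \<Rightarrow> 'a \<Rightarrow> 'a" where
  "smear u l e = l *\<^sub>R e + ((1 - l) / 2) *\<^sub>R u"

definition lambda_ef :: "'a::euclidean_space set \<Rightarrow> 'a \<Rightarrow> 'a \<Rightarrow> 'a \<Rightarrow> real" where
  "lambda_ef \<Omega> u e f = Sup {l \<in> {0..1}. jointly_measurable \<Omega> u (smear u l e) (smear u l f)}"

definition lambda_opt :: "'a::euclidean_space set \<Rightarrow> 'a \<Rightarrow> real" where
  "lambda_opt \<Omega> u = Inf {lambda_ef \<Omega> u e f | e f. gpt_effect \<Omega> e \<and> gpt_effect \<Omega> f}"

text \<open>Elements of V_A \<otimes> V_B are represented as bilinear forms on V_A^* \<times> V_B^*,
  so that \<omega>(a,b) = w a b.\<close>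
definition min_tensor_cone :: "'a::euclidean_space set \<Rightarrow> 'b::euclidean_space set \<Rightarrow> ('a \<Rightarrow> 'b \<Rightarrow> real) set" where
  "min_tensor_cone \<Omega>A \<Omega>B = {w. \<exists>(n::nat) x y. (\<forall>i<n. x i \<in> pos_cone \<Omega>A \<and> y i \<in> pos_cone \<Omega>B)
      \<and> w = (\<lambda>a b. \<Sum>i<n. (a \<bullet> x i) * (b \<bullet> y i))}"

definition max_tensor_cone :: "'a::euclidean_space set \<Rightarrow> 'b::euclidean_space set \<Rightarrow> ('a \<Rightarrow> 'b \<Rightarrow> real) set" where
  "max_tensor_cone \<Omega>A \<Omega>B = {w. bilinear w \<and>
      (\<forall>a\<in>dual_cone \<Omega>A. \<forall>b\<in>dual_cone \<Omega>B. 0 \<le> w a b)}"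

definition composite_cone :: "'a::euclidean_space set \<Rightarrow> 'b::euclidean_space set \<Rightarrow> ('a \<Rightarrow> 'b \<Rightarrow> real) set \<Rightarrow> bool" where
  "composite_cone \<Omega>A \<Omega>B C \<longleftrightarrow>
     min_tensor_cone \<Omega>A \<Omega>B \<subseteq> C \<and> C \<subseteq> max_tensor_cone \<Omega>A \<Omega>B \<and>
     (\<forall>w\<in>C. \<forall>v\<in>C. (\<lambda>a b. w a b + v a b) \<in> C) \<and>
     (\<forall>w\<in>C. \<forall>t::real. 0 \<le> t \<longrightarrow> (\<lambda>a b. t * w a b) \<in> C)"

definition composite_states :: "'a::euclidean_space \<Rightarrow> 'b::euclidean_space \<Rightarrow> ('a \<Rightarrow> 'b \<Rightarrow> real) set \<Rightarrow> ('a \<Rightarrow> 'b \<Rightarrow> real) set" where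
  "composite_states uA uB C = {w \<in> C. w uA uB = 1}"

text \<open>The map \<omega>-hat : V_B^* \<rightarrow> V_A with a(\<omega>-hat(b)) = \<omega>(a,b).\<close>
definition hat :: "('a::euclidean_space \<Rightarrow> 'b \<Rightarrow> real) \<Rightarrow> 'b \<Rightarrow> 'a" where
  "hat w b = (\<Sum>i\<in>Basis. w i b *\<^sub>R i)"

definition steering :: "'a::euclidean_space set \<Rightarrow> 'a \<Rightarrow> 'b::euclidean_space set \<Rightarrow> 'b \<Rightarrow> ('a \<Rightarrow> 'b \<Rightarrow> real) \<Rightarrow> bool" where
  "steering \<Omega>A uA \<Omega>B uB w \<longleftrightarrow>
     (\<forall>(n::nat) (\<alpha>::nat \<Rightarrow> 'a).
        (\<forall>i<n. \<alpha> i \<in> pos_cone \<Omega>A \<and> 0 \<le> uA \<bullet> \<alpha> i \<and> uA \<bullet> \<alpha> i \<le> 1) \<and>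
        (\<Sum>i<n. \<alpha> i) = hat w uB \<longrightarrow>
        (\<exists>e::nat \<Rightarrow> 'b. (\<forall>i<n. gpt_effect \<Omega>B (e i)) \<and> (\<Sum>i<n. e i) = uB \<and>
             (\<forall>i<n. \<alpha> i = hat w (e i))))"

text \<open>Bell functional for dichotomic observables given by effects a1,a2 (on A), b1,b2 (on B),
  with associated functionals A_i = 2 a_i - u_A, B_j = 2 b_j - u_B.\<close>
definition bell :: "'a::euclidean_space \<Rightarrow> 'b::euclidean_space \<Rightarrow> ('a \<Rightarrow> 'b \<Rightarrow> real) \<Rightarrow> 'a \<Rightarrow> 'a \<Rightarrow> 'b \<Rightarrow> 'b \<Rightarrow> real" where
  "bell uA uB w a1 a2 b1 b2 =
     (let A1 = 2 *\<^sub>R a1 - uA; A2 = 2 *\<^sub>R a2 - uA; B1 = 2 *\<^sub>R b1 - uB; B2 = 2 *\<^sub>R b2 - uB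
      in w A1 B1 + w A1 B2 + w A2 B1 - w A2 B2)"

end

theory Submission
  imports Defs
begin

(* Both bounds come from one extremal problem on A alone. Measuring b1 and b2 on B
   prepares, from a state with A-marginal alpha0, the assemblage
   alpha0 = beta_j + (alpha0 - beta_j) (j = 1, 2), and the Bell value depends only on this
   assemblage and the effects on A; let M be its maximum over all assemblages and effects.
   For jointly measurable effects the Bell value is at most 2 (CHSH), and smearing by lambda
   scales it by lambda, so lambda_{e,f} B <= 2 and hence B <= 2 / lambda_opt. Conversely, if
   lambda M < 2, a separating hyperplane (linear programming duality) yields a joint
   observable for the lambda-smeared effects, so lambda_opt >= 2 / M. Uniform universal
   steering realises the maximising assemblage by a state, whose Bell value M saturates
   the bound. *)

lemma pos_cone_eq_conic_hull: "pos_cone \<Omega> = conic hull \<Omega>"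
  by (simp add: pos_cone_def conic_hull_explicit)

lemma state_in_pos_cone: "x \<in> \<Omega> \<Longrightarrow> x \<in> pos_cone \<Omega>"
  unfolding pos_cone_eq_conic_hull by (rule hull_inc)

lemma zero_in_pos_cone: "\<Omega> \<noteq> {} \<Longrightarrow> 0 \<in> pos_cone \<Omega>"
  unfolding pos_cone_eq_conic_hull by simp

lemma pos_cone_scaleR: "y \<in> pos_cone \<Omega> \<Longrightarrow> 0 \<le> t \<Longrightarrow> t *\<^sub>R y \<in> pos_cone \<Omega>"
  unfolding pos_cone_eq_conic_hull by (rule conicD[OF conic_conic_hull])

lemma convex_pos_cone: "gpt_state_space \<Omega> u \<Longrightarrow> convex (pos_cone \<Omega>)"
  unfolding pos_cone_eq_conic_hull gpt_state_space_def by (intro convex_conic_hull) auto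

lemma closed_pos_cone: "gpt_state_space \<Omega> u \<Longrightarrow> closed (pos_cone \<Omega>)"
  unfolding pos_cone_eq_conic_hull gpt_state_space_def
  by (intro closed_conic_hull) (auto simp: gpt_state_space_def)

lemma pos_cone_add:
  assumes "gpt_state_space \<Omega> u" "y1 \<in> pos_cone \<Omega>" "y2 \<in> pos_cone \<Omega>"
  shows "y1 + y2 \<in> pos_cone \<Omega>"
proof -
  have "(1/2) *\<^sub>R y1 + (1/2) *\<^sub>R y2 \<in> pos_cone \<Omega>"
    using convex_pos_cone[OF assms(1)] assms(2,3) by (intro convexD) auto
  from pos_cone_scaleR[OF this, of 2] show ?thesis by (simp add: scaleR_add_right)
qed

lemma pos_cone_normalize:
  assumes "gpt_state_space \<Omega> u" "y \<in> pos_cone \<Omega>"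
  obtains x where "x \<in> \<Omega>" "y = (u \<bullet> y) *\<^sub>R x" "0 \<le> u \<bullet> y"
proof -
  have "\<exists>x\<in>\<Omega>. y = (u \<bullet> y) *\<^sub>R x \<and> 0 \<le> u \<bullet> y"
    using assms unfolding pos_cone_def gpt_state_space_def by auto
  then show ?thesis using that by blast
qed

lemma inner_unit_pos_cone_nonneg: "gpt_state_space \<Omega> u \<Longrightarrow> y \<in> pos_cone \<Omega> \<Longrightarrow> 0 \<le> u \<bullet> y"
  by (metis pos_cone_normalize)

lemma state_of_pos_cone:
  "gpt_state_space \<Omega> u \<Longrightarrow> y \<in> pos_cone \<Omega> \<Longrightarrow> u \<bullet> y = 1 \<Longrightarrow> y \<in> \<Omega>"
  by (metis pos_cone_normalize scaleR_one)

lemma dual_cone_iff: "d \<in> dual_cone \<Omega> \<longleftrightarrow> (\<forall>x\<in>\<Omega>. 0 \<le> d \<bullet> x)"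
proof
  assume "d \<in> dual_cone \<Omega>"
  then show "\<forall>x\<in>\<Omega>. 0 \<le> d \<bullet> x" by (auto simp: dual_cone_def state_in_pos_cone)
next
  assume "\<forall>x\<in>\<Omega>. 0 \<le> d \<bullet> x"
  then show "d \<in> dual_cone \<Omega>" by (auto simp: dual_cone_def pos_cone_def)
qed

lemma compact_pos_cone_slice:
  assumes ss: "gpt_state_space \<Omega> u"
  shows "compact {y \<in> pos_cone \<Omega>. u \<bullet> y \<le> 1}"
proof -
  obtain R where R: "\<forall>x\<in>\<Omega>. norm x \<le> R"
    using ss compact_imp_bounded[of \<Omega>] by (auto simp: gpt_state_space_def bounded_iff)
  have "norm y \<le> max R 0" if y: "y \<in> pos_cone \<Omega>" "u \<bullet> y \<le> 1" for y
  proof -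
    obtain x where x: "x \<in> \<Omega>" "y = (u \<bullet> y) *\<^sub>R x" "0 \<le> u \<bullet> y"
      using pos_cone_normalize[OF ss y(1)] .
    have "norm y = (u \<bullet> y) * norm x" by (subst x(2)) (simp add: x(3))
    also have "\<dots> \<le> 1 * max R 0" using x R y(2) by (intro mult_mono) auto
    finally show ?thesis by simp
  qed
  then have "bounded {y \<in> pos_cone \<Omega>. u \<bullet> y \<le> 1}" by (auto simp: bounded_iff)
  moreover have "closed {y \<in> pos_cone \<Omega>. u \<bullet> y \<le> 1}"
    using closed_Int[OF closed_pos_cone[OF ss] closed_halfspace_le[of u 1]]
    by (simp add: Int_def)
  ultimately show ?thesis by (simp add: compact_eq_bounded_closed)
qed

lemma compact_effects:
  assumes ss: "gpt_state_space \<Omega> u"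
  shows "compact {e. gpt_effect \<Omega> e}"
proof -
  have "{e. gpt_effect \<Omega> e} = (\<Inter>x\<in>\<Omega>. {e. x \<bullet> e \<le> 1} \<inter> {e. x \<bullet> e \<ge> 0})"
    by (auto simp: gpt_effect_def inner_commute)
  then have closed: "closed {e. gpt_effect \<Omega> e}"
    by (auto intro: closed_halfspace_le closed_halfspace_ge)
  have "\<exists>R. \<forall>e. gpt_effect \<Omega> e \<longrightarrow> \<bar>e \<bullet> i\<bar> \<le> R" if "i \<in> Basis" for i :: 'a
  proof -
    have "i \<in> span \<Omega>" using ss by (auto simp: gpt_state_space_def)
    then obtain T r where T: "finite T" "T \<subseteq> \<Omega>" "i = (\<Sum>v\<in>T. r v *\<^sub>R v)"
      unfolding span_explicit by auto
    have "\<bar>e \<bullet> i\<bar> \<le> (\<Sum>v\<in>T. \<bar>r v\<bar>)" if "gpt_effect \<Omega> e" for e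
    proof -
      have "\<bar>e \<bullet> i\<bar> \<le> (\<Sum>v\<in>T. \<bar>r v * (e \<bullet> v)\<bar>)"
        by (simp add: T(3) inner_sum_right)
      also have "\<dots> \<le> (\<Sum>v\<in>T. \<bar>r v\<bar>)"
      proof (rule sum_mono)
        fix v assume "v \<in> T"
        then have "0 \<le> e \<bullet> v" "e \<bullet> v \<le> 1" using that T(2) by (auto simp: gpt_effect_def)
        then show "\<bar>r v * (e \<bullet> v)\<bar> \<le> \<bar>r v\<bar>" by (simp add: abs_mult mult_left_le)
      qed
      finally show ?thesis .
    qed
    then show ?thesis by blast
  qed
  then obtain R where R: "\<forall>i\<in>Basis. \<forall>e. gpt_effect \<Omega> e \<longrightarrow> \<bar>e \<bullet> i\<bar> \<le> R i" by metis
  have "norm e \<le> (\<Sum>i\<in>Basis. R i)" if "gpt_effect \<Omega> e" for e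
    using norm_le_l1[of e] sum_mono[of Basis "\<lambda>i. \<bar>e \<bullet> i\<bar>" R] R that by fastforce
  then have "bounded {e. gpt_effect \<Omega> e}" by (auto simp: bounded_iff)
  with closed show ?thesis by (simp add: compact_eq_bounded_closed)
qed

lemma unit_effect: "gpt_state_space \<Omega> u \<Longrightarrow> gpt_effect \<Omega> u"
  by (simp add: gpt_state_space_def gpt_effect_def)

lemma inner_hat: "bilinear w \<Longrightarrow> a \<bullet> hat w b = w a b"
proof -
  assume "bilinear w"
  then have lin: "linear (\<lambda>x. w x b)" by (simp add: bilinear_def)
  have "a \<bullet> hat w b = (\<Sum>i\<in>Basis. (a \<bullet> i) * w i b)"
    by (simp add: hat_def inner_sum_right mult.commute)
  also have "\<dots> = w (\<Sum>i\<in>Basis. (a \<bullet> i) *\<^sub>R i) b"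
    by (simp add: linear_sum[OF lin] linear_scale[OF lin])
  finally show ?thesis by (simp add: euclidean_representation)
qed

definition assemblage :: "'a::euclidean_space set \<Rightarrow> 'a \<Rightarrow> 'a \<Rightarrow> 'a \<Rightarrow> bool" where
  "assemblage \<Omega> \<alpha>0 \<beta>1 \<beta>2 \<longleftrightarrow> \<alpha>0 \<in> \<Omega> \<and> \<beta>1 \<in> pos_cone \<Omega> \<and> \<beta>2 \<in> pos_cone \<Omega> \<and>
     \<alpha>0 - \<beta>1 \<in> pos_cone \<Omega> \<and> \<alpha>0 - \<beta>2 \<in> pos_cone \<Omega>"

definition assemblage_bell :: "'a::euclidean_space \<Rightarrow> 'a \<Rightarrow> 'a \<Rightarrow> 'a \<Rightarrow> 'a \<Rightarrow> 'a \<Rightarrow> real" where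
  "assemblage_bell u \<alpha>0 \<beta>1 \<beta>2 e f =
     2 * ((2 *\<^sub>R e - u) \<bullet> (\<beta>1 + \<beta>2 - \<alpha>0) + (2 *\<^sub>R f - u) \<bullet> (\<beta>1 - \<beta>2))"

lemma bell_eq_assemblage_bell:
  assumes "bilinear w" "hat w uB = \<alpha>0" "hat w b1 = \<beta>1" "hat w b2 = \<beta>2"
  shows "bell uA uB w a1 a2 b1 b2 = assemblage_bell uA \<alpha>0 \<beta>1 \<beta>2 a1 a2"
proof -
  have dichotomic: "w a (2 *\<^sub>R b - uB) = a \<bullet> (2 *\<^sub>R hat w b - hat w uB)" for a b
    using assms(1) by (simp add: bilinear_rsub bilinear_rmul inner_hat inner_diff_right)
  show ?thesis unfolding bell_def assemblage_bell_def Let_def dichotomic assms(2-4)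
    by (simp add: algebra_simps)
qed

lemma assemblage_trivial:
  assumes "gpt_state_space \<Omega> u" "x \<in> \<Omega>"
  shows "assemblage \<Omega> x x x" and "assemblage_bell u x x x u u = 2"
  using assms by (auto simp: assemblage_def assemblage_bell_def gpt_state_space_def
      inner_diff_left state_in_pos_cone zero_in_pos_cone)

lemma dichotomic_smear: "2 *\<^sub>R smear u l a - u = l *\<^sub>R (2 *\<^sub>R a - u)"
proof -
  have "2 *\<^sub>R smear u l a = (2 * l) *\<^sub>R a + (1 - l) *\<^sub>R u" by (simp add: smear_def scaleR_add_right)
  then show ?thesis by (simp add: algebra_simps)
qed

lemma bell_smear:
  assumes "bilinear w"
  shows "bell uA uB w (smear uA l a1) (smear uA l a2) b1 b2 = l * bell uA uB w a1 a2 b1 b2"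
  unfolding bell_def Let_def dichotomic_smear bilinear_lmul[OF assms] by (simp add: algebra_simps)

lemma assemblage_bell_smear:
  "assemblage_bell u \<alpha>0 \<beta>1 \<beta>2 (smear u l e) (smear u l f) = l * assemblage_bell u \<alpha>0 \<beta>1 \<beta>2 e f"
  unfolding assemblage_bell_def dichotomic_smear by (simp add: algebra_simps)

lemma steering_obtains_effect:
  assumes ss: "gpt_state_space \<Omega>A uA" and st: "steering \<Omega>A uA \<Omega>B uB w"
    and "hat w uB = \<alpha>0" "\<alpha>0 \<in> \<Omega>A" "\<beta> \<in> pos_cone \<Omega>A" "\<alpha>0 - \<beta> \<in> pos_cone \<Omega>A"
  obtains b where "gpt_effect \<Omega>B b" "hat w b = \<beta>"
proof -
  define \<alpha> :: "nat \<Rightarrow> 'a" where "\<alpha> i = (if i = 0 then \<beta> else \<alpha>0 - \<beta>)" for i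
  have "uA \<bullet> \<alpha>0 = 1" using ss assms(4) by (simp add: gpt_state_space_def)
  moreover have "0 \<le> uA \<bullet> \<beta>" "0 \<le> uA \<bullet> (\<alpha>0 - \<beta>)"
    using inner_unit_pos_cone_nonneg[OF ss] assms(5,6) by auto
  ultimately have "\<forall>i<2. \<alpha> i \<in> pos_cone \<Omega>A \<and> 0 \<le> uA \<bullet> \<alpha> i \<and> uA \<bullet> \<alpha> i \<le> 1"
    using assms(5,6) by (auto simp: \<alpha>_def inner_diff_right)
  moreover have "(\<Sum>i<2. \<alpha> i) = hat w uB" using assms(3) by (simp add: numeral_2_eq_2 \<alpha>_def)
  ultimately obtain e where "\<forall>i<2. gpt_effect \<Omega>B (e i)" "\<forall>i<2. \<alpha> i = hat w (e i)"
    using st unfolding steering_def by blast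
  then have "gpt_effect \<Omega>B (e 0)" "\<alpha> 0 = hat w (e 0)" by auto
  then show ?thesis by (intro that) (simp_all add: \<alpha>_def)
qed

lemma bell_le_2_if_jointly_measurable:
  assumes ssB: "gpt_state_space \<Omega>B uB"
    and wC: "w \<in> max_tensor_cone \<Omega>A \<Omega>B" and wn: "w uA uB = 1"
    and jm: "jointly_measurable \<Omega>A uA e f"
    and b1: "gpt_effect \<Omega>B b1" and b2: "gpt_effect \<Omega>B b2"
  shows "bell uA uB w e f b1 b2 \<le> 2"
proof -
  obtain g where g: "\<forall>x\<in>\<Omega>A. 0 \<le> g \<bullet> x \<and> g \<bullet> x \<le> e \<bullet> x \<and> g \<bullet> x \<le> f \<bullet> x \<and>
      e \<bullet> x + f \<bullet> x \<le> g \<bullet> x + uA \<bullet> x"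
    using jm by (auto simp: jointly_measurable_def)
  have bil: "bilinear w" and pos: "\<And>a b. a \<in> dual_cone \<Omega>A \<Longrightarrow> b \<in> dual_cone \<Omega>B \<Longrightarrow> 0 \<le> w a b"
    using wC by (auto simp: max_tensor_cone_def)
  have A: "g \<in> dual_cone \<Omega>A" "e - g \<in> dual_cone \<Omega>A" "f - g \<in> dual_cone \<Omega>A"
    "uA - e - f + g \<in> dual_cone \<Omega>A"
    using g by (auto simp: dual_cone_iff inner_diff_left inner_add_left)
  have B: "b1 \<in> dual_cone \<Omega>B" "uB - b1 \<in> dual_cone \<Omega>B" "b2 \<in> dual_cone \<Omega>B" "uB - b2 \<in> dual_cone \<Omega>B"
    using b1 b2 ssB by (auto simp: dual_cone_iff gpt_effect_def gpt_state_space_def inner_diff_left)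
  \<comment> \<open>\<open>2 - bell\<close> is a nonnegative combination of the 16 values of \<open>w\<close> on these positive functionals.\<close>
  have "0 \<le> w G H" if "G \<in> {g, e - g, f - g, uA - e - f + g}" "H \<in> {b1, uB - b1, b2, uB - b2}" for G H
    using that A B pos by auto
  then have "0 \<le> w g b1" "0 \<le> w (e - g) b1" "0 \<le> w (f - g) b1" "0 \<le> w (uA - e - f + g) b1"
    "0 \<le> w g (uB - b1)" "0 \<le> w (e - g) (uB - b1)" "0 \<le> w (f - g) (uB - b1)" "0 \<le> w (uA - e - f + g) (uB - b1)"
    "0 \<le> w g b2" "0 \<le> w (e - g) b2" "0 \<le> w (f - g) b2" "0 \<le> w (uA - e - f + g) b2"
    "0 \<le> w g (uB - b2)" "0 \<le> w (e - g) (uB - b2)" "0 \<le> w (f - g) (uB - b2)" "0 \<le> w (uA - e - f + g) (uB - b2)"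
    by auto
  then show ?thesis using wn unfolding bell_def Let_def
    by (simp add: bilinear_ladd[OF bil] bilinear_lsub[OF bil] bilinear_radd[OF bil]
        bilinear_rsub[OF bil] bilinear_lmul[OF bil] bilinear_rmul[OF bil])
qed

lemma jointly_measurable_smear_zero:
  "gpt_state_space \<Omega> u \<Longrightarrow> jointly_measurable \<Omega> u (smear u 0 e) (smear u 0 f)"
  unfolding jointly_measurable_def smear_def gpt_state_space_def by (intro exI[of _ 0]) auto

lemma lambda_ef_nonneg: "gpt_state_space \<Omega> u \<Longrightarrow> 0 \<le> lambda_ef \<Omega> u e f"
  unfolding lambda_ef_def
  by (rule cSup_upper) (auto simp: jointly_measurable_smear_zero bdd_above_def)

lemma lambda_ef_ge:
  assumes "0 < c" "c \<le> 1"
    and jm: "\<And>l. 0 \<le> l \<Longrightarrow> l < c \<Longrightarrow> jointly_measurable \<Omega> u (smear u l e) (smear u l f)"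
  shows "c \<le> lambda_ef \<Omega> u e f"
proof (rule dense_le_bounded[OF \<open>0 < c\<close>])
  fix l assume "0 < l" "l < c"
  then show "l \<le> lambda_ef \<Omega> u e f"
    unfolding lambda_ef_def using jm \<open>c \<le> 1\<close>
    by (intro cSup_upper) (auto simp: bdd_above_def)
qed

lemma lambda_ef_mult_bell_le:
  assumes ssA: "gpt_state_space \<Omega>A uA" and ssB: "gpt_state_space \<Omega>B uB"
    and wC: "w \<in> max_tensor_cone \<Omega>A \<Omega>B" and wn: "w uA uB = 1"
    and b1: "gpt_effect \<Omega>B b1" and b2: "gpt_effect \<Omega>B b2"
  shows "lambda_ef \<Omega>A uA a1 a2 * bell uA uB w a1 a2 b1 b2 \<le> 2"
proof (cases "bell uA uB w a1 a2 b1 b2 \<le> 0")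
  case True
  then show ?thesis using lambda_ef_nonneg[OF ssA] by (smt (verit) mult_nonneg_nonpos)
next
  case False
  have "l * bell uA uB w a1 a2 b1 b2 \<le> 2"
    if "jointly_measurable \<Omega>A uA (smear uA l a1) (smear uA l a2)" for l
    using bell_le_2_if_jointly_measurable[OF ssB wC wn that b1 b2] wC
    by (simp add: bell_smear max_tensor_cone_def)
  then have "lambda_ef \<Omega>A uA a1 a2 \<le> 2 / bell uA uB w a1 a2 b1 b2"
    unfolding lambda_ef_def using False jointly_measurable_smear_zero[OF ssA, of a1 a2]
    by (intro cSup_least) (fastforce, auto simp: field_simps)
  then show ?thesis using False by (simp add: field_simps)
qed

lemma lambda_opt_le_lambda_ef:
  "gpt_state_space \<Omega> u \<Longrightarrow> gpt_effect \<Omega> e \<Longrightarrow> gpt_effect \<Omega> f \<Longrightarrow>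
    lambda_opt \<Omega> u \<le> lambda_ef \<Omega> u e f"
  unfolding lambda_opt_def by (rule cInf_lower) (auto simp: bdd_below_def intro: lambda_ef_nonneg)

lemma lambda_opt_ge:
  assumes "gpt_state_space \<Omega> u"
    and "\<And>e f. gpt_effect \<Omega> e \<Longrightarrow> gpt_effect \<Omega> f \<Longrightarrow> c \<le> lambda_ef \<Omega> u e f"
  shows "c \<le> lambda_opt \<Omega> u"
  unfolding lambda_opt_def using assms unit_effect[OF assms(1)] by (intro cInf_greatest) auto

lemma compact_convex_linear_bound:
  fixes K :: "('a::euclidean_space \<times> real) set"
  assumes "compact K" "convex K" "(0, t0) \<in> K" and neg: "\<And>t. (0, t) \<in> K \<Longrightarrow> t < 0"
  shows "\<exists>g. \<forall>v t. (v, t) \<in> K \<longrightarrow> t < g \<bullet> v"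
proof -
  have "K \<inter> {0} \<times> {0..} = {}" using neg by force
  then obtain a b where sepK: "\<forall>z\<in>K. a \<bullet> z < b" and sepL: "\<forall>z\<in>{0} \<times> {0..}. b < a \<bullet> z"
    using separating_hyperplane_compact_closed[OF assms(2,1) _ convex_Times closed_Times] assms(3)
    by (metis convex_singleton closed_singleton convex_real_interval(1) closed_real_atLeast empty_iff)
  obtain g s where a: "a = (g, s)" by (cases a)
  have sL: "b < s * t" if "0 \<le> t" for t using sepL that by (auto simp: a)
  have "0 \<le> s"
  proof (rule ccontr)
    assume "\<not> 0 \<le> s"
    then have "b < s * ((\<bar>b\<bar> + 1) / - s)" by (intro sL divide_nonneg_pos) auto
    also have "\<dots> = - (\<bar>b\<bar> + 1)" using \<open>\<not> 0 \<le> s\<close> by simp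
    finally show False by linarith
  qed
  moreover have "s * t0 < b" using sepK assms(3) by (auto simp: a)
  ultimately have "0 < s" using sL[of 0] by (cases "s = 0") auto
  have "t < (- (1 / s) *\<^sub>R g) \<bullet> v" if "(v, t) \<in> K" for v t
  proof -
    have "g \<bullet> v + s * t < 0" using sepK that sL[of 0] by (fastforce simp: a)
    then show ?thesis using \<open>0 < s\<close> by (simp add: field_simps)
  qed
  then show ?thesis by blast
qed

lemma assemblage_of_balanced_cone_vectors:
  assumes ss: "gpt_state_space \<Omega> u"
    and cone: "a1 \<in> pos_cone \<Omega>" "a2 \<in> pos_cone \<Omega>" "a3 \<in> pos_cone \<Omega>" "a4 \<in> pos_cone \<Omega>"
    and norm: "u \<bullet> a1 + u \<bullet> a2 + u \<bullet> a3 + u \<bullet> a4 = 1" and bal: "a1 + a2 = a3 + a4"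
  shows "assemblage \<Omega> (2 *\<^sub>R (a3 + a4)) (2 *\<^sub>R a2) (2 *\<^sub>R a4)"
    and "assemblage_bell u (2 *\<^sub>R (a3 + a4)) (2 *\<^sub>R a2) (2 *\<^sub>R a4) e f
           = 2 + 8 * ((e + f - u) \<bullet> a2 - e \<bullet> a3 - f \<bullet> a4)"
proof -
  have "u \<bullet> (a1 + a2) = u \<bullet> (a3 + a4)" using bal by simp
  then have half: "u \<bullet> a3 + u \<bullet> a4 = 1/2" using norm by (simp add: inner_add_right)
  have "2 *\<^sub>R (a3 + a4) \<in> \<Omega>"
    using cone by (intro state_of_pos_cone[OF ss] pos_cone_scaleR pos_cone_add[OF ss])
      (auto simp: inner_add_right half)
  moreover have "2 *\<^sub>R (a3 + a4) - 2 *\<^sub>R a2 = 2 *\<^sub>R a1"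
    using bal by (metis add_diff_cancel_right' scaleR_right_diff_distrib)
  moreover have "2 *\<^sub>R (a3 + a4) - 2 *\<^sub>R a4 = 2 *\<^sub>R a3" by (simp add: scaleR_add_right)
  ultimately show "assemblage \<Omega> (2 *\<^sub>R (a3 + a4)) (2 *\<^sub>R a2) (2 *\<^sub>R a4)"
    using cone by (simp add: assemblage_def pos_cone_scaleR)
  show "assemblage_bell u (2 *\<^sub>R (a3 + a4)) (2 *\<^sub>R a2) (2 *\<^sub>R a4) e f
           = 2 + 8 * ((e + f - u) \<bullet> a2 - e \<bullet> a3 - f \<bullet> a4)"
    using half unfolding assemblage_bell_def by (simp add: inner_simps algebra_simps)
qed

lemma jointly_measurable_if_assemblage_bell_less:
  assumes ss: "gpt_state_space \<Omega> u"
    and bound: "\<And>\<alpha>0 \<beta>1 \<beta>2. assemblage \<Omega> \<alpha>0 \<beta>1 \<beta>2 \<Longrightarrow> assemblage_bell u \<alpha>0 \<beta>1 \<beta>2 e f < 2"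
  shows "jointly_measurable \<Omega> u e f"
proof -
  define S where "S = {y \<in> pos_cone \<Omega>. u \<bullet> y \<le> 1}"
  define P where "P = (S \<times> S \<times> S \<times> S) \<inter> {z. (u, u, u, u) \<bullet> z = 1}"
  \<comment> \<open>Points \<open>(0, t)\<close> of \<open>T ` P\<close> are assemblages with Bell value \<open>2 + 8 t\<close>; a bound
    \<open>t < g \<bullet> v\<close> on \<open>T ` P\<close>, evaluated at the four rays through a state, says that \<open>g\<close>
    is a joint effect for \<open>e\<close> and \<open>f\<close>.\<close>
  define T :: "'a \<times> 'a \<times> 'a \<times> 'a \<Rightarrow> 'a \<times> real" where
    "T = (\<lambda>(a1, a2, a3, a4). (a1 + a2 - a3 - a4, (e + f - u) \<bullet> a2 - e \<bullet> a3 - f \<bullet> a4))"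
  have memP: "(a1, a2, a3, a4) \<in> P \<longleftrightarrow> a1 \<in> pos_cone \<Omega> \<and> a2 \<in> pos_cone \<Omega> \<and> a3 \<in> pos_cone \<Omega> \<and>
      a4 \<in> pos_cone \<Omega> \<and> u \<bullet> a1 + u \<bullet> a2 + u \<bullet> a3 + u \<bullet> a4 = 1" for a1 a2 a3 a4
    using inner_unit_pos_cone_nonneg[OF ss, of a1] inner_unit_pos_cone_nonneg[OF ss, of a2]
      inner_unit_pos_cone_nonneg[OF ss, of a3] inner_unit_pos_cone_nonneg[OF ss, of a4]
    by (auto simp: P_def S_def add.assoc)
  have "linear T" by (rule linearI) (auto simp: T_def split_beta algebra_simps inner_simps)
  moreover have "compact P" unfolding P_def S_def
    by (intro compact_Int_closed compact_Times compact_pos_cone_slice[OF ss] closed_hyperplane)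
  moreover have "convex S"
    using convex_Int[OF convex_pos_cone[OF ss] convex_halfspace_le[of u 1]] by (simp add: S_def Int_def)
  then have "convex P" unfolding P_def by (intro convex_Int convex_Times convex_hyperplane)
  ultimately have K: "compact (T ` P)" "convex (T ` P)"
    by (auto intro: compact_continuous_image linear_continuous_on convex_linear_image
        simp: linear_conv_bounded_linear)
  have state_in_P: "(x, 0, 0, 0) \<in> P" "(0, x, 0, 0) \<in> P" "(0, 0, x, 0) \<in> P" "(0, 0, 0, x) \<in> P"
    if "x \<in> \<Omega>" for x
    using that ss by (auto simp: memP state_in_pos_cone zero_in_pos_cone gpt_state_space_def)
  obtain x0 where x0: "x0 \<in> \<Omega>" using ss by (auto simp: gpt_state_space_def)
  then have "(x0 /\<^sub>R 2, 0, x0 /\<^sub>R 2, 0) \<in> P"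
    using ss by (auto simp: memP state_in_pos_cone zero_in_pos_cone pos_cone_scaleR gpt_state_space_def)
  then have "(0, - (e \<bullet> x0) / 2) \<in> T ` P" by (force simp: T_def)
  moreover have "t < 0" if image: "(0, t) \<in> T ` P" for t
  proof -
    obtain a1 a2 a3 a4 where a: "(a1, a2, a3, a4) \<in> P" "T (a1, a2, a3, a4) = (0, t)"
      using image by (metis imageE prod_cases4)
    then have bal: "a1 + a2 = a3 + a4" and t: "t = (e + f - u) \<bullet> a2 - e \<bullet> a3 - f \<bullet> a4"
      by (auto simp: T_def algebra_simps)
    note balanced = assemblage_of_balanced_cone_vectors[OF ss _ _ _ _ _ bal]
    from a(1) have "assemblage_bell u (2 *\<^sub>R (a3 + a4)) (2 *\<^sub>R a2) (2 *\<^sub>R a4) e f < 2"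
      unfolding memP by (intro bound balanced(1)) auto
    with a(1) show ?thesis unfolding memP using balanced(2) t by auto
  qed
  ultimately obtain g where g: "\<And>v t. (v, t) \<in> T ` P \<Longrightarrow> t < g \<bullet> v"
    using compact_convex_linear_bound[OF K] by blast
  have g_on_P: "snd (T z) < g \<bullet> fst (T z)" if "z \<in> P" for z
    using g[of "fst (T z)" "snd (T z)"] that by auto
  show ?thesis unfolding jointly_measurable_def
  proof (intro exI[of _ g] ballI)
    fix x assume "x \<in> \<Omega>"
    from g_on_P[OF state_in_P(1)[OF this]] g_on_P[OF state_in_P(2)[OF this]]
      g_on_P[OF state_in_P(3)[OF this]] g_on_P[OF state_in_P(4)[OF this]]
    show "0 \<le> g \<bullet> x \<and> g \<bullet> x \<le> e \<bullet> x \<and> g \<bullet> x \<le> f \<bullet> x \<and> e \<bullet> x + f \<bullet> x \<le> g \<bullet> x + u \<bullet> x"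
      by (simp add: T_def inner_simps)
  qed
qed

lemma compact_assemblages:
  assumes ss: "gpt_state_space \<Omega> u"
  shows "compact {(\<alpha>0, \<beta>1, \<beta>2). assemblage \<Omega> \<alpha>0 \<beta>1 \<beta>2}"
proof -
  define S where "S = {y \<in> pos_cone \<Omega>. u \<bullet> y \<le> 1}"
  have "u \<bullet> \<beta> \<le> 1" if "\<alpha>0 \<in> \<Omega>" "\<alpha>0 - \<beta> \<in> pos_cone \<Omega>" for \<alpha>0 \<beta>
    using that ss inner_unit_pos_cone_nonneg[OF ss that(2)]
    by (simp add: gpt_state_space_def inner_diff_right)
  then have "{(\<alpha>0, \<beta>1, \<beta>2). assemblage \<Omega> \<alpha>0 \<beta>1 \<beta>2} =
      (\<Omega> \<times> S \<times> S) \<inter> (\<lambda>z. fst z - fst (snd z)) -` pos_cone \<Omega> \<inter> (\<lambda>z. fst z - snd (snd z)) -` pos_cone \<Omega>"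
    by (auto simp: assemblage_def S_def)
  moreover have "compact (\<Omega> \<times> S \<times> S)"
    using ss compact_pos_cone_slice[OF ss] by (simp add: S_def gpt_state_space_def compact_Times)
  ultimately show ?thesis
    by (simp only:) (intro compact_Int_closed closed_vimage closed_pos_cone[OF ss] continuous_intros)
qed

lemma assemblage_bell_attains_max:
  assumes ss: "gpt_state_space \<Omega> u"
  obtains \<alpha>0 \<beta>1 \<beta>2 e f
  where "assemblage \<Omega> \<alpha>0 \<beta>1 \<beta>2" "gpt_effect \<Omega> e" "gpt_effect \<Omega> f"
    and "\<And>\<alpha>0' \<beta>1' \<beta>2' e' f'. assemblage \<Omega> \<alpha>0' \<beta>1' \<beta>2' \<Longrightarrow> gpt_effect \<Omega> e' \<Longrightarrow> gpt_effect \<Omega> f' \<Longrightarrow>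
           assemblage_bell u \<alpha>0' \<beta>1' \<beta>2' e' f' \<le> assemblage_bell u \<alpha>0 \<beta>1 \<beta>2 e f"
proof -
  define D where "D = {(\<alpha>0, \<beta>1, \<beta>2). assemblage \<Omega> \<alpha>0 \<beta>1 \<beta>2} \<times> {e. gpt_effect \<Omega> e} \<times> {e. gpt_effect \<Omega> e}"
  define F where "F = (\<lambda>((\<alpha>0, \<beta>1, \<beta>2), e, f). assemblage_bell u \<alpha>0 \<beta>1 \<beta>2 e f)"
  have "compact D" unfolding D_def
    by (intro compact_Times compact_assemblages[OF ss] compact_effects[OF ss])
  moreover have "D \<noteq> {}"
  proof -
    obtain x0 where "x0 \<in> \<Omega>" using ss by (auto simp: gpt_state_space_def)
    then have "((x0, x0, x0), u, u) \<in> D"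
      using assemblage_trivial[OF ss] unit_effect[OF ss] by (simp add: D_def)
    then show ?thesis by blast
  qed
  moreover have "continuous_on D F"
    unfolding F_def assemblage_bell_def split_def by (intro continuous_intros)
  ultimately obtain z where z: "z \<in> D" "\<forall>z'\<in>D. F z' \<le> F z"
    by (metis continuous_attains_sup)
  obtain \<alpha>0 \<beta>1 \<beta>2 e f where z_eq: "z = ((\<alpha>0, \<beta>1, \<beta>2), e, f)" by (metis prod.collapse)
  show ?thesis
  proof (rule that)
    show "assemblage \<Omega> \<alpha>0 \<beta>1 \<beta>2" "gpt_effect \<Omega> e" "gpt_effect \<Omega> f"
      using z(1) by (simp_all add: z_eq D_def)
    fix \<alpha>0' \<beta>1' \<beta>2' e' f'
    assume "assemblage \<Omega> \<alpha>0' \<beta>1' \<beta>2'" "gpt_effect \<Omega> e'" "gpt_effect \<Omega> f'"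
    then have "((\<alpha>0', \<beta>1', \<beta>2'), e', f') \<in> D" by (simp add: D_def)
    then show "assemblage_bell u \<alpha>0' \<beta>1' \<beta>2' e' f' \<le> assemblage_bell u \<alpha>0 \<beta>1 \<beta>2 e f"
      using z(2) by (auto simp: z_eq F_def)
  qed
qed

lemma two_le_assemblage_bell_bound:
  assumes ss: "gpt_state_space \<Omega> u"
    and max: "\<And>\<alpha>0 \<beta>1 \<beta>2 e f. assemblage \<Omega> \<alpha>0 \<beta>1 \<beta>2 \<Longrightarrow> gpt_effect \<Omega> e \<Longrightarrow> gpt_effect \<Omega> f \<Longrightarrow>
        assemblage_bell u \<alpha>0 \<beta>1 \<beta>2 e f \<le> M"
  shows "2 \<le> M"
proof -
  obtain x0 where x0: "x0 \<in> \<Omega>" using ss by (auto simp: gpt_state_space_def)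
  have "assemblage_bell u x0 x0 x0 u u \<le> M"
    by (rule max) (use assemblage_trivial(1)[OF ss x0] unit_effect[OF ss] in auto)
  then show ?thesis using assemblage_trivial(2)[OF ss x0] by simp
qed

lemma two_div_le_lambda_opt:
  assumes ss: "gpt_state_space \<Omega> u"
    and max: "\<And>\<alpha>0 \<beta>1 \<beta>2 e f. assemblage \<Omega> \<alpha>0 \<beta>1 \<beta>2 \<Longrightarrow> gpt_effect \<Omega> e \<Longrightarrow> gpt_effect \<Omega> f \<Longrightarrow>
        assemblage_bell u \<alpha>0 \<beta>1 \<beta>2 e f \<le> M"
  shows "2 / M \<le> lambda_opt \<Omega> u"
proof (rule lambda_opt_ge[OF ss])
  have "2 \<le> M" using two_le_assemblage_bell_bound[OF ss max] .
  fix e f assume "gpt_effect \<Omega> e" "gpt_effect \<Omega> f"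
  show "2 / M \<le> lambda_ef \<Omega> u e f"
  proof (rule lambda_ef_ge)
    fix l assume l: "0 \<le> l" "l < 2 / M"
    show "jointly_measurable \<Omega> u (smear u l e) (smear u l f)"
    proof (rule jointly_measurable_if_assemblage_bell_less[OF ss])
      fix \<alpha>0 \<beta>1 \<beta>2 assume "assemblage \<Omega> \<alpha>0 \<beta>1 \<beta>2"
      then have "l * assemblage_bell u \<alpha>0 \<beta>1 \<beta>2 e f \<le> l * M"
        using max \<open>gpt_effect \<Omega> e\<close> \<open>gpt_effect \<Omega> f\<close> l(1) by (simp add: mult_left_mono)
      also have "\<dots> < 2" using l \<open>2 \<le> M\<close> by (simp add: field_simps)
      finally show "assemblage_bell u \<alpha>0 \<beta>1 \<beta>2 (smear u l e) (smear u l f) < 2"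
        by (simp add: assemblage_bell_smear)
    qed
  qed (use \<open>2 \<le> M\<close> in auto)
qed

lemma bell_le_2_div_lambda_opt:
  assumes ssA: "gpt_state_space \<Omega>A uA" and ssB: "gpt_state_space \<Omega>B uB"
    and pos: "0 < lambda_opt \<Omega>A uA"
    and wC: "w \<in> max_tensor_cone \<Omega>A \<Omega>B" and wn: "w uA uB = 1"
    and a1: "gpt_effect \<Omega>A a1" and a2: "gpt_effect \<Omega>A a2"
    and b1: "gpt_effect \<Omega>B b1" and b2: "gpt_effect \<Omega>B b2"
  shows "bell uA uB w a1 a2 b1 b2 \<le> 2 / lambda_opt \<Omega>A uA"
proof (cases "bell uA uB w a1 a2 b1 b2 \<le> 0")
  case True
  moreover have "0 \<le> 2 / lambda_opt \<Omega>A uA" using pos by simp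
  ultimately show ?thesis by linarith
next
  case False
  then have "lambda_opt \<Omega>A uA * bell uA uB w a1 a2 b1 b2 \<le> lambda_ef \<Omega>A uA a1 a2 * bell uA uB w a1 a2 b1 b2"
    using lambda_opt_le_lambda_ef[OF ssA a1 a2] by (simp add: mult_right_mono)
  also have "\<dots> \<le> 2" by (rule lambda_ef_mult_bell_le[OF ssA ssB wC wn b1 b2])
  finally show ?thesis by (simp add: pos_le_divide_eq[OF pos] mult.commute)
qed

theorem theorem1:
  fixes \<Omega>A :: "'a::euclidean_space set" and uA :: 'a
    and \<Omega>B :: "'b::euclidean_space set" and uB :: 'b
    and C :: "('a \<Rightarrow> 'b \<Rightarrow> real) set"
  assumes "gpt_state_space \<Omega>A uA" and "gpt_state_space \<Omega>B uB"
    and "composite_cone \<Omega>A \<Omega>B C"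
    and "\<forall>\<alpha>\<in>\<Omega>A. \<exists>w\<in>composite_states uA uB C. hat w uB = \<alpha> \<and> steering \<Omega>A uA \<Omega>B uB w"
  shows "(\<forall>w\<in>composite_states uA uB C. \<forall>a1 a2 b1 b2.
             gpt_effect \<Omega>A a1 \<and> gpt_effect \<Omega>A a2 \<and> gpt_effect \<Omega>B b1 \<and> gpt_effect \<Omega>B b2 \<longrightarrow>
             bell uA uB w a1 a2 b1 b2 \<le> 2 / lambda_opt \<Omega>A uA)
       \<and> (\<exists>w\<in>composite_states uA uB C. \<exists>a1 a2 b1 b2.
             gpt_effect \<Omega>A a1 \<and> gpt_effect \<Omega>A a2 \<and> gpt_effect \<Omega>B b1 \<and> gpt_effect \<Omega>B b2 \<and>
             bell uA uB w a1 a2 b1 b2 = 2 / lambda_opt \<Omega>A uA)"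
proof -
  note ssA = assms(1) and ssB = assms(2)
  have state: "w \<in> max_tensor_cone \<Omega>A \<Omega>B" "w uA uB = 1" if "w \<in> composite_states uA uB C" for w
    using that assms(3) by (auto simp: composite_states_def composite_cone_def)
  obtain \<alpha>0 \<beta>1 \<beta>2 e f where opt: "assemblage \<Omega>A \<alpha>0 \<beta>1 \<beta>2" "gpt_effect \<Omega>A e" "gpt_effect \<Omega>A f"
    and max: "\<And>\<alpha>0' \<beta>1' \<beta>2' e' f'. assemblage \<Omega>A \<alpha>0' \<beta>1' \<beta>2' \<Longrightarrow> gpt_effect \<Omega>A e' \<Longrightarrow>
      gpt_effect \<Omega>A f' \<Longrightarrow> assemblage_bell uA \<alpha>0' \<beta>1' \<beta>2' e' f' \<le> assemblage_bell uA \<alpha>0 \<beta>1 \<beta>2 e f"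
    using assemblage_bell_attains_max[OF ssA] by blast
  define M where "M = assemblage_bell uA \<alpha>0 \<beta>1 \<beta>2 e f"
  have "2 \<le> M" using two_le_assemblage_bell_bound[OF ssA max] by (simp add: M_def)
  have lopt: "2 / M \<le> lambda_opt \<Omega>A uA" using two_div_le_lambda_opt[OF ssA max] by (simp add: M_def)
  moreover have "0 < 2 / M" using \<open>2 \<le> M\<close> by simp
  ultimately have pos: "0 < lambda_opt \<Omega>A uA" by linarith
  have upper: "bell uA uB w a1 a2 b1 b2 \<le> 2 / lambda_opt \<Omega>A uA"
    if "w \<in> composite_states uA uB C" "gpt_effect \<Omega>A a1" "gpt_effect \<Omega>A a2"
      "gpt_effect \<Omega>B b1" "gpt_effect \<Omega>B b2" for w a1 a2 b1 b2
    using bell_le_2_div_lambda_opt[OF ssA ssB pos state[OF that(1)] that(2-5)] .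
  have \<alpha>0: "\<alpha>0 \<in> \<Omega>A" and \<beta>: "\<beta>1 \<in> pos_cone \<Omega>A" "\<alpha>0 - \<beta>1 \<in> pos_cone \<Omega>A"
    "\<beta>2 \<in> pos_cone \<Omega>A" "\<alpha>0 - \<beta>2 \<in> pos_cone \<Omega>A"
    using opt(1) by (simp_all add: assemblage_def)
  obtain w where w: "w \<in> composite_states uA uB C" "hat w uB = \<alpha>0" "steering \<Omega>A uA \<Omega>B uB w"
    using assms(4) \<alpha>0 by blast
  obtain b1 where b1: "gpt_effect \<Omega>B b1" "hat w b1 = \<beta>1"
    using steering_obtains_effect[OF ssA w(3) w(2) \<alpha>0 \<beta>(1,2)] .
  obtain b2 where b2: "gpt_effect \<Omega>B b2" "hat w b2 = \<beta>2"
    using steering_obtains_effect[OF ssA w(3) w(2) \<alpha>0 \<beta>(3,4)] .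
  have "bell uA uB w e f b1 b2 = M"
    using bell_eq_assemblage_bell[OF _ w(2) b1(2) b2(2)] state(1)[OF w(1)]
    by (simp add: M_def max_tensor_cone_def)
  moreover have "2 / lambda_opt \<Omega>A uA \<le> M"
    using lopt pos \<open>2 \<le> M\<close> by (simp add: field_simps)
  ultimately have "bell uA uB w e f b1 b2 = 2 / lambda_opt \<Omega>A uA"
    using upper[OF w(1) opt(2,3) b1(1) b2(1)] by linarith
  with upper w(1) opt(2,3) b1(1) b2(1) show ?thesis by fast
qed

end
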